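(* Let $G$ be a tree with $n\ge k\ge 1$ vertices and let $\mathcal C_0,\dots,\mathcal C_l$ be an optimal (minimum-length) spanning restricted transition walk with $k$ agents, so $l=h^r_k(G)$. Let $y$ be the vertex of $G$ that is encountered last, i.e. the unique vertex of $\mathcal C_j\setminus\mathcal C_{j-1}$ for the largest $j$ at which a vertex not occurring in $\mathcal C_0,\dots,\mathcal C_{j-1}$ appears, and let $x$ be a vertex of $\mathcal C_0$ farthest (in $G$) from $y$. Let $P_{xy}$ be the path of $G$ between $x$ and $y$. Then $l \ge (n-k)+\sum_{e\in E} d^k_{P_{xy}}(e)$.
   Context: All graphs are finite, simple, undirected. A configuration of $k$ agents is a $k$-tuple of pairwise distinct vertices of $G$ whose induced subgraph is connected (identified with its vertex set when convenient). Configurations $(v_1,\dots,v_k)$, $(v'_1,\dots,v'_k)$ are adjacent if for every $i$ either $v_i=v'_i$ or $(v_i,v'_i)\in E$. A restricted transition walk is a sequence of configurations $\mathcal C_0,\dots,\mathcal C_l$ such that consecutive configurations are adjacent and $\mathcal C_{t+1}$ contains exactly one vertex not in $\mathcal C_t$ (a $1$-transition edge); it is spanning if every vertex lies in some $\mathcal C_t$. $h^r_k(G)$ is the minimum length of a spanning restricted transition walk. For a tree $G$, a path $P$ in $G$ and $k\ge1$, define $d^k_P(e)\in\{0,1\}$ for every edge $e$: $d^k_P(e)=0$ if $e$ lies on $P$; otherwise write $e=(u,v)$ with $u$ closer to $P$ than $v$, let $T_P(e)$ be the component of $G-e$ containing $v$, rooted at $v$, and set $d^k_P(e)=1$ if $T_P(e)$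 has height at least $k-1$ (equivalently, some vertex $z$ of $T_P(e)$ has distance at least $k$ from $u$), and $d^k_P(e)=0$ otherwise. *)

theory Defs
  imports Main
begin

definition gpath :: "'a set \<Rightarrow> 'a set set \<Rightarrow> 'a \<Rightarrow> 'a \<Rightarrow> 'a list \<Rightarrow> bool" where
  "gpath V E u v p \<longleftrightarrow> p \<noteq> [] \<and> hd p = u \<and> last p = v \<and> set p \<subseteq> V \<and> distinct p
     \<and> (\<forall>i. Suc i < length p \<longrightarrow> {p ! i, p ! Suc i} \<in> E)"

definition graph_connected :: "'a set \<Rightarrow> 'a set set \<Rightarrow> bool" where
  "graph_connected V E \<longleftrightarrow> (\<forall>u\<in>V. \<forall>v\<in>V. \<exists>p. gpath V E u v p)"

definition simple_graph :: "'a set \<Rightarrow> 'a set set \<Rightarrow> bool" where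
  "simple_graph V E \<longleftrightarrow> finite V \<and> (\<forall>e\<in>E. card e = 2 \<and> e \<subseteq> V)"

definition is_tree :: "'a set \<Rightarrow> 'a set set \<Rightarrow> bool" where
  "is_tree V E \<longleftrightarrow> simple_graph V E \<and> V \<noteq> {} \<and> (\<forall>u\<in>V. \<forall>v\<in>V. \<exists>!p. gpath V E u v p)"

definition gdist :: "'a set \<Rightarrow> 'a set set \<Rightarrow> 'a \<Rightarrow> 'a \<Rightarrow> nat" where
  "gdist V E u v = (LEAST n. \<exists>p. gpath V E u v p \<and> length p = Suc n)"

definition path_edges :: "'a list \<Rightarrow> 'a set set" where
  "path_edges p = {{p ! i, p ! Suc i} | i. Suc i < length p}"

definition dist_to_path :: "'a set \<Rightarrow> 'a set set \<Rightarrow> 'a list \<Rightarrow> 'a \<Rightarrow> nat" where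
  "dist_to_path V E P w = Min ((\<lambda>q. gdist V E q w) ` set P)"

definition component :: "'a set \<Rightarrow> 'a set set \<Rightarrow> 'a \<Rightarrow> 'a set" where
  "component V E v = {z\<in>V. \<exists>p. gpath V E v z p}"

text \<open>The indicator d^k_P(e): for e = (u,v) off P with u closer to P, T_P(e) is the component
  of G - e containing v, rooted at v; d = 1 iff T_P(e) has height at least k - 1.\<close>
definition dkP :: "'a set \<Rightarrow> 'a set set \<Rightarrow> nat \<Rightarrow> 'a list \<Rightarrow> 'a set \<Rightarrow> nat" where
  "dkP V E k P e =
     (if e \<in> path_edges P then 0
      else if (\<exists>u v. e = {u, v} \<and> dist_to_path V E P u < dist_to_path V E P v \<and>
                 (\<exists>z\<in>component V (E - {e}) v. gdist V (E - {e}) v z \<ge> k - 1))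
      then 1 else 0)"

definition config :: "'a set \<Rightarrow> 'a set set \<Rightarrow> nat \<Rightarrow> 'a list \<Rightarrow> bool" where
  "config V E k C \<longleftrightarrow> length C = k \<and> distinct C \<and> set C \<subseteq> V \<and>
     graph_connected (set C) {e\<in>E. e \<subseteq> set C}"

definition config_adj :: "'a set set \<Rightarrow> 'a list \<Rightarrow> 'a list \<Rightarrow> bool" where
  "config_adj E C D \<longleftrightarrow> list_all2 (\<lambda>a b. a = b \<or> {a, b} \<in> E) C D"

text \<open>Restricted transition walk C_0,...,C_l (list of length l+1).\<close>
definition rt_walk :: "'a set \<Rightarrow> 'a set set \<Rightarrow> nat \<Rightarrow> 'a list list \<Rightarrow> bool" where
  "rt_walk V E k Cs \<longleftrightarrow> Cs \<noteq> [] \<and> (\<forall>C\<in>set Cs. config V E k C) \<and>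
     (\<forall>t. Suc t < length Cs \<longrightarrow> config_adj E (Cs ! t) (Cs ! Suc t) \<and>
          card (set (Cs ! Suc t) - set (Cs ! t)) = 1)"

definition spanning :: "'a set \<Rightarrow> 'a list list \<Rightarrow> bool" where
  "spanning V Cs \<longleftrightarrow> (\<Union>C\<in>set Cs. set C) = V"

definition hr :: "'a set \<Rightarrow> 'a set set \<Rightarrow> nat \<Rightarrow> nat" where
  "hr V E k = (LEAST l. \<exists>Cs. rt_walk V E k Cs \<and> spanning V Cs \<and> length Cs = Suc l)"

end

theory Submission
  imports Defs
begin

text \<open>
  Each transition brings exactly one new vertex into the configuration, so it suffices to find
  n - k + \<Sum>e. d(e) distinct transitions. The first visits of the n - k vertices outside C_0
  are such transitions. For an edge e = {u, v} with d(e) = 1 let T be the side of e away from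
  the path P, and z a vertex of T at distance at least k - 1 from v. A connected configuration of
  k vertices containing z cannot reach beyond v, so it lies inside T. As x and y lie on P, hence
  outside T, the walk enters T (from u) before its first visit to z, which precedes the
  appearance of the last new vertex y; so it leaves T again afterwards. That transition brings
  in u a second time, and e is the only edge joining u to the previous configuration. So these
  transitions are no first visits, and distinct edges give distinct transitions.
\<close>

section \<open>Paths and components\<close>

lemma gpath_rev: "gpath V E u v p \<Longrightarrow> gpath V E v u (rev p)"
  unfolding gpath_def
proof (intro conjI allI impI; (elim conjE)?)
  fix i assume edges: "\<forall>i. Suc i < length p \<longrightarrow> {p ! i, p ! Suc i} \<in> E"
    and i: "Suc i < length (rev p)"
  let ?j = "length p - Suc (Suc i)"
  have "{p ! ?j, p ! Suc ?j} \<in> E" using edges i by simp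
  moreover have "rev p ! i = p ! Suc ?j" using i by (simp add: rev_nth Suc_diff_Suc)
  moreover have "rev p ! Suc i = p ! ?j" using i by (simp add: rev_nth)
  ultimately show "{rev p ! i, rev p ! Suc i} \<in> E" by (simp add: insert_commute)
qed (auto simp: hd_rev last_rev)

lemma gpath_mono: "gpath V E u v p \<Longrightarrow> E \<subseteq> E' \<Longrightarrow> V \<subseteq> V' \<Longrightarrow> gpath V' E' u v p"
  unfolding gpath_def by blast

lemma gpath_take: "gpath V E u v p \<Longrightarrow> i < length p \<Longrightarrow> gpath V E u (p ! i) (take (Suc i) p)"
  unfolding gpath_def by (auto simp: last_conv_nth hd_take dest: in_set_takeD)

lemma gpath_snoc:
  assumes "gpath V E u v p" "w \<in> V" "w \<notin> set p" "{v, w} \<in> E"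
  shows "gpath V E u w (p @ [w])"
  unfolding gpath_def
proof (intro conjI allI impI)
  have p: "p \<noteq> []" "hd p = u" "last p = v"
    and edges: "\<forall>i. Suc i < length p \<longrightarrow> {p ! i, p ! Suc i} \<in> E"
    using assms(1) by (auto simp: gpath_def)
  fix i assume i: "Suc i < length (p @ [w])"
  show "{(p @ [w]) ! i, (p @ [w]) ! Suc i} \<in> E"
  proof (cases "Suc i < length p")
    case True then show ?thesis using edges by (simp add: nth_append)
  next
    case False
    then have "Suc i = length p" using i by simp
    then have "(p @ [w]) ! Suc i = w" by (metis nth_append_length)
    moreover have "(p @ [w]) ! i = v"
      using \<open>Suc i = length p\<close> p by (metis diff_Suc_1 last_conv_nth lessI nth_append)
    ultimately show ?thesis using assms(4) by simp
  qed
qed (use assms in \<open>auto simp: gpath_def\<close>)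

lemma path_edges_subset_set: "f \<in> path_edges p \<Longrightarrow> f \<subseteq> set p"
  by (auto simp: path_edges_def)

lemma gpath_delete_edge: "gpath V E u v p \<Longrightarrow> e \<notin> path_edges p \<Longrightarrow> gpath V (E - {e}) u v p"
  unfolding gpath_def path_edges_def by blast

lemma gdist_le: "gpath V E u v p \<Longrightarrow> gdist V E u v \<le> length p - 1"
  unfolding gdist_def by (rule Least_le) (auto simp: gpath_def)

lemma gdist_shortest_path:
  "gpath V E u v p \<Longrightarrow> \<exists>q. gpath V E u v q \<and> length q = Suc (gdist V E u v)"
  unfolding gdist_def by (rule LeastI_ex, rule exI[of _ "length p - 1"]) (auto simp: gpath_def)

lemma self_in_component: "v \<in> V \<Longrightarrow> v \<in> component V E v"
  by (auto simp: component_def gpath_def intro!: exI[of _ "[v]"])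

lemma component_edge_closed:
  assumes a: "a \<in> component V E v" and ab: "{a, b} \<in> E" and b: "b \<in> V"
  shows "b \<in> component V E v"
proof -
  obtain p where p: "gpath V E v a p" using a by (auto simp: component_def)
  show ?thesis
  proof (cases "b \<in> set p")
    case True
    then obtain i where "i < length p" "b = p ! i" by (metis in_set_conv_nth)
    then show ?thesis using gpath_take[OF p] b by (auto simp: component_def)
  next
    case False
    then show ?thesis using gpath_snoc[OF p b False ab] b by (auto simp: component_def)
  qed
qed

lemma gpath_meets_component:
  assumes p: "gpath V E a b p" and q: "q \<in> set p" "q \<in> component V E w"
  shows "set p \<subseteq> component V E w"
proof -
  have step: "p ! i \<in> component V E w \<longleftrightarrow> p ! Suc i \<in> component V E w" if "Suc i < length p" for i
  proof -
    have "{p ! i, p ! Suc i} \<in> E" "{p ! Suc i, p ! i} \<in> E" "p ! i \<in> V" "p ! Suc i \<in> V"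
      using p that by (auto simp: gpath_def insert_commute)
    then show ?thesis
      using component_edge_closed[of "p ! i" V E w "p ! Suc i"]
        component_edge_closed[of "p ! Suc i" V E w "p ! i"] by blast
  qed
  have all: "p ! i \<in> component V E w \<longleftrightarrow> p ! 0 \<in> component V E w" if "i < length p" for i
    using that
  proof (induction i)
    case (Suc i)
    then show ?case using step[of i] by simp
  qed simp
  obtain i where "i < length p" "q = p ! i" using q(1) by (metis in_set_conv_nth)
  then have start: "p ! 0 \<in> component V E w" using all q(2) by blast
  show ?thesis
  proof
    fix r assume "r \<in> set p"
    then obtain m where "m < length p" "r = p ! m" by (metis in_set_conv_nth)
    then show "r \<in> component V E w" using all start by blast
  qed
qed

lemma simple_graph_edgeD:
  assumes "simple_graph V E" "{u, v} \<in> E"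
  shows "u \<in> V" "v \<in> V" "u \<noteq> v"
proof -
  have card: "card {u, v} = 2" and "{u, v} \<subseteq> V" using assms unfolding simple_graph_def by blast+
  then show "u \<in> V" "v \<in> V" by simp_all
  show "u \<noteq> v"
  proof
    assume "u = v"
    then show False using card by simp
  qed
qed

lemma simple_graph_finite_edges:
  assumes "simple_graph V E"
  shows "finite E"
proof (rule finite_subset)
  show "E \<subseteq> Pow V" using assms unfolding simple_graph_def by blast
  show "finite (Pow V)" using assms unfolding simple_graph_def by simp
qed

section \<open>The two sides of a tree edge\<close>

lemma component_boundary_edge:
  assumes sg: "simple_graph V E" and ab: "{a, b} \<in> E"
    and a: "a \<in> component V (E - {{u, v}}) v" and b: "b \<notin> component V (E - {{u, v}}) v"
    and u: "u \<notin> component V (E - {{u, v}}) v"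
  shows "a = v \<and> b = u"
proof -
  have "{a, b} = {u, v}"
    using component_edge_closed[OF a, of b] ab b simple_graph_edgeD(2)[OF sg ab] by blast
  moreover have "v \<in> component V (E - {{u, v}}) v"
    using simple_graph_edgeD(2)[OF sg] ab calculation self_in_component by metis
  ultimately show ?thesis using a b u by (auto simp: doubleton_eq_iff)
qed

lemma tree_edge_separates:
  assumes t: "is_tree V E" and e: "{u, v} \<in> E"
  shows "u \<notin> component V (E - {{u, v}}) v"
proof
  assume "u \<in> component V (E - {{u, v}}) v"
  then obtain p where p: "gpath V (E - {{u, v}}) v u p" by (auto simp: component_def)
  have sg: "simple_graph V E" using t by (simp add: is_tree_def)
  note uv = simple_graph_edgeD[OF sg e]
  have "gpath V E u v (rev p)" using gpath_mono[OF gpath_rev[OF p]] by blast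
  moreover have "gpath V E u v [u, v]" using uv e by (auto simp: gpath_def less_Suc_eq)
  moreover have "\<exists>!p. gpath V E u v p" using t uv unfolding is_tree_def by blast
  ultimately have "rev p = [u, v]" by (metis the1_equality)
  then have "p = [v, u]" by (simp add: rev_swap)
  moreover have "\<forall>i. Suc i < length p \<longrightarrow> {p ! i, p ! Suc i} \<in> E - {{u, v}}"
    using p unfolding gpath_def by blast
  ultimately have "{v, u} \<in> E - {{u, v}}" by auto
  then show False using insert_commute[of v u "{}"] by blast
qed

lemma tree_gdist_near_end_less:
  assumes t: "is_tree V E" and e: "{u, v} \<in> E" and q: "q \<in> component V (E - {{u, v}}) v"
  shows "gdist V E q v < gdist V E q u"
proof -
  let ?T = "component V (E - {{u, v}}) v"
  have sg: "simple_graph V E" using t by (simp add: is_tree_def)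
  have uT: "u \<notin> ?T" using tree_edge_separates[OF t e] .
  have "q \<in> V" using q by (simp add: component_def)
  moreover have "u \<in> V" using simple_graph_edgeD(1)[OF sg e] .
  ultimately have "\<exists>!p. gpath V E q u p" using t unfolding is_tree_def by blast
  then obtain p0 where "gpath V E q u p0" by (rule ex1E)
  from gdist_shortest_path[OF this]
  obtain p where p: "gpath V E q u p" "length p = Suc (gdist V E q u)" by blast
  have "p \<noteq> []" "hd p = q" "last p = u" using p(1) by (simp_all add: gpath_def)
  then have "p ! 0 \<in> ?T" "p ! gdist V E q u \<notin> ?T"
    using q uT p(2) hd_conv_nth[of p] last_conv_nth[of p] by simp_all
  from ex_least_nat_less[of "\<lambda>m. p ! m \<notin> ?T", OF this(2)] this(1)
  obtain i where i: "i < gdist V E q u" "\<forall>m\<le>i. p ! m \<in> ?T" "p ! Suc i \<notin> ?T" by auto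
  have "{p ! i, p ! Suc i} \<in> E" using p i(1) by (auto simp: gpath_def)
  then have "p ! i = v" using component_boundary_edge[OF sg _ _ i(3) uT] i(2) by simp
  then have "gpath V E q v (take (Suc i) p)" using gpath_take[OF p(1), of i] i(1) p(2) by simp
  then have "gdist V E q v \<le> i" using gdist_le i(1) p(2) by force
  then show ?thesis using i(1) by simp
qed

text \<open>Otherwise the whole path would lie on the far side, where every vertex is closer to v
  than to u.\<close>

lemma path_avoids_far_side:
  assumes t: "is_tree V E" and e: "{u, v} \<in> E" and eP: "{u, v} \<notin> path_edges P"
    and P: "gpath V E x y P" and closer: "dist_to_path V E P u < dist_to_path V E P v"
  shows "set P \<inter> component V (E - {{u, v}}) v = {}"
proof (rule ccontr)
  let ?T = "component V (E - {{u, v}}) v"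
  assume "set P \<inter> ?T \<noteq> {}"
  then have PT: "set P \<subseteq> ?T"
    using gpath_meets_component[OF gpath_delete_edge[OF P eP]] by blast
  have "finite ((\<lambda>q. gdist V E q u) ` set P)" "(\<lambda>q. gdist V E q u) ` set P \<noteq> {}"
    using P by (auto simp: gpath_def)
  from Min_in[OF this] obtain q where q: "q \<in> set P" "dist_to_path V E P u = gdist V E q u"
    unfolding dist_to_path_def by auto
  have "dist_to_path V E P v \<le> gdist V E q v" unfolding dist_to_path_def using q(1) by simp
  also have "\<dots> < gdist V E q u" using PT q(1) by (intro tree_gdist_near_end_less[OF t e]) blast
  finally show False using closer q(2) by linarith
qed

text \<open>A path inside a configuration from a vertex z of the far side to a vertex outside
  it would run through v and then u, so it would have more than
  gdist v z + 1 \<ge> k vertices.\<close>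

lemma config_within_far_side:
  assumes sg: "simple_graph V E" and e: "{u, v} \<in> E"
    and u: "u \<notin> component V (E - {{u, v}}) v" and C: "config V E k C"
    and z: "z \<in> set C" "z \<in> component V (E - {{u, v}}) v"
    and deep: "k - 1 \<le> gdist V (E - {{u, v}}) v z"
  shows "set C \<subseteq> component V (E - {{u, v}}) v"
proof (rule ccontr)
  let ?T = "component V (E - {{u, v}}) v"
  assume "\<not> set C \<subseteq> ?T"
  then obtain w where w: "w \<in> set C" "w \<notin> ?T" by blast
  have CV: "set C \<subseteq> V" and "card (set C) = k"
    using C by (auto simp: config_def distinct_card)
  obtain p where p: "gpath (set C) {f \<in> E. f \<subseteq> set C} z w p"
    using C z w unfolding config_def graph_connected_def by blast
  have "length p = card (set p)" "set p \<subseteq> set C" using p by (auto simp: gpath_def distinct_card)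
  then have len: "length p \<le> k" using \<open>card (set C) = k\<close> by (metis card_mono List.finite_set)
  have pVE: "gpath V E z w p" using gpath_mono[OF p] CV by blast
  have ends: "p ! 0 = z" "p ! (length p - 1) = w"
    using p by (auto simp: gpath_def hd_conv_nth last_conv_nth)
  obtain i where i: "i < length p - 1" "\<forall>m\<le>i. p ! m \<in> ?T" "p ! Suc i \<notin> ?T"
    using ex_least_nat_less[of "\<lambda>m. p ! m \<notin> ?T"] ends z(2) w(2) by auto
  have "{p ! i, p ! Suc i} \<in> E" using pVE i(1) by (auto simp: gpath_def)
  then have "p ! i = v" using component_boundary_edge[OF sg _ _ i(3) u] i(2) by simp
  then have prefix: "gpath V E z v (take (Suc i) p)" using gpath_take[OF pVE, of i] i(1) by simp
  have "set (take (Suc i) p) \<subseteq> ?T" using i(2) by (auto simp: set_conv_nth)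
  then have "{u, v} \<notin> path_edges (take (Suc i) p)" using u path_edges_subset_set by blast
  from gpath_rev[OF gpath_delete_edge[OF prefix this]]
  have "gdist V (E - {{u, v}}) v z \<le> i" using gdist_le i(1) by force
  then show False using deep len i(1) by linarith
qed

section \<open>Restricted transition walks\<close>

definition entering :: "'a list list \<Rightarrow> nat \<Rightarrow> 'a set" where
  "entering Cs t = set (Cs ! t) - set (Cs ! (t - 1))"

definition revisiting :: "'a list list \<Rightarrow> nat \<Rightarrow> bool" where
  "revisiting Cs t \<longleftrightarrow> (\<exists>s<t. entering Cs t \<inter> set (Cs ! s) \<noteq> {})"

definition entry_edges :: "'a set set \<Rightarrow> 'a list list \<Rightarrow> nat \<Rightarrow> 'a set set" where
  "entry_edges E Cs t = {{a, b} | a b. a \<in> set (Cs ! (t - 1)) \<and> b \<in> entering Cs t \<and> {a, b} \<in> E}"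

lemma rt_walk_config: "rt_walk V E k Cs \<Longrightarrow> i < length Cs \<Longrightarrow> config V E k (Cs ! i)"
  by (auto simp: rt_walk_def)

lemma rt_walk_entering_singleton:
  assumes "rt_walk V E k Cs" "0 < t" "t < length Cs"
  obtains b where "entering Cs t = {b}"
proof -
  have "Suc (t - 1) < length Cs" using assms(2,3) by simp
  then have "card (set (Cs ! Suc (t - 1)) - set (Cs ! (t - 1))) = 1"
    using assms(1) unfolding rt_walk_def by blast
  then have "card (entering Cs t) = 1" using assms(2) by (simp add: entering_def)
  then show ?thesis using that card_1_singletonE by blast
qed

lemma rt_walk_step:
  assumes "rt_walk V E k Cs" "Suc t < length Cs"
  shows "length (Cs ! t) = length (Cs ! Suc t)"
    "\<And>i. i < length (Cs ! t) \<Longrightarrow> Cs ! t ! i = Cs ! Suc t ! i \<or> {Cs ! t ! i, Cs ! Suc t ! i} \<in> E"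
  using assms by (auto simp: rt_walk_def config_adj_def list_all2_conv_all_nth)

lemma rt_walk_moved_from:
  assumes "rt_walk V E k Cs" "Suc t < length Cs" "w \<in> set (Cs ! Suc t)"
  shows "\<exists>a\<in>set (Cs ! t). a = w \<or> {a, w} \<in> E"
proof -
  obtain i where "i < length (Cs ! Suc t)" "w = Cs ! Suc t ! i"
    using assms(3) by (metis in_set_conv_nth)
  then show ?thesis using rt_walk_step[OF assms(1,2)] by (metis nth_mem)
qed

lemma rt_walk_moved_to:
  assumes "rt_walk V E k Cs" "Suc t < length Cs" "a \<in> set (Cs ! t)"
  shows "\<exists>b\<in>set (Cs ! Suc t). a = b \<or> {a, b} \<in> E"
proof -
  obtain i where "i < length (Cs ! t)" "a = Cs ! t ! i"
    using assms(3) by (metis in_set_conv_nth)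
  then show ?thesis using rt_walk_step[OF assms(1,2)] by (metis nth_mem)
qed

lemma rt_walk_leaves_through_boundary:
  assumes W: "rt_walk V E k Cs" "Suc t < length Cs"
    and boundary: "\<And>a b. {a, b} \<in> E \<Longrightarrow> a \<in> T \<Longrightarrow> b \<notin> T \<Longrightarrow> a = v \<and> b = u"
    and inside: "set (Cs ! t) \<subseteq> T" and outside: "\<not> set (Cs ! Suc t) \<subseteq> T"
  shows "entering Cs (Suc t) = {u}" "entry_edges E Cs (Suc t) = {{v, u}}"
proof -
  obtain w where w: "w \<in> set (Cs ! Suc t)" "w \<notin> T" using outside by blast
  then obtain a where a: "a \<in> set (Cs ! t)" "{a, w} \<in> E"
    using rt_walk_moved_from[OF W] inside by blast
  then have "a = v" "w = u" using boundary inside w(2) by blast+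
  then have "u \<in> entering Cs (Suc t)" "u \<notin> T" using w inside by (auto simp: entering_def)
  moreover obtain b where "entering Cs (Suc t) = {b}"
    using rt_walk_entering_singleton[OF W(1)] W(2) by blast
  ultimately show new: "entering Cs (Suc t) = {u}" by simp
  show "entry_edges E Cs (Suc t) = {{v, u}}"
    using new a \<open>a = v\<close> \<open>w = u\<close> \<open>u \<notin> T\<close> boundary inside
    unfolding entry_edges_def by fastforce
qed

lemma rt_walk_enters_through_boundary:
  assumes W: "rt_walk V E k Cs" "Suc t < length Cs"
    and boundary: "\<And>a b. {a, b} \<in> E \<Longrightarrow> a \<in> T \<Longrightarrow> b \<notin> T \<Longrightarrow> a = v \<and> b = u"
    and outside: "\<not> set (Cs ! t) \<subseteq> T" and inside: "set (Cs ! Suc t) \<subseteq> T"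
  shows "u \<in> set (Cs ! t)"
proof -
  obtain w where w: "w \<in> set (Cs ! t)" "w \<notin> T" using outside by blast
  then obtain b where "b \<in> set (Cs ! Suc t)" "{b, w} \<in> E"
    using rt_walk_moved_to[OF W] inside by (metis insert_commute subsetD)
  then show ?thesis using boundary inside w by blast
qed

lemma spanning_first_visit:
  assumes "spanning V Cs" "w \<in> V"
  obtains t where "t < length Cs" "w \<in> set (Cs ! t)" "\<forall>s<t. w \<notin> set (Cs ! s)"
proof -
  obtain C where "C \<in> set Cs" "w \<in> set C" using assms unfolding spanning_def by blast
  then obtain n where "n < length Cs \<and> w \<in> set (Cs ! n)" by (metis in_set_conv_nth)
  from ex_least_nat_le[of "\<lambda>t. t < length Cs \<and> w \<in> set (Cs ! t)", OF this]
  obtain t where "t < length Cs" "w \<in> set (Cs ! t)" "\<forall>s<t. \<not> (s < length Cs \<and> w \<in> set (Cs ! s))"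
    by blast
  then show ?thesis using that by simp
qed

text \<open>The walk starts outside T, visits z (which forces it into T) and
  later reaches y outside T; the exit from T revisits u, through
  which the walk had entered.\<close>

lemma rt_walk_returns_through_boundary:
  assumes W: "rt_walk V E k Cs" and sp: "spanning V Cs"
    and boundary: "\<And>a b. {a, b} \<in> E \<Longrightarrow> a \<in> T \<Longrightarrow> b \<notin> T \<Longrightarrow> a = v \<and> b = u"
    and z: "z \<in> V" "z \<in> T" and confined: "\<And>i. i < length Cs \<Longrightarrow> z \<in> set (Cs ! i) \<Longrightarrow> set (Cs ! i) \<subseteq> T"
    and x: "x \<in> set (Cs ! 0)" "x \<notin> T"
    and j: "0 < j" "j < length Cs" and y: "y \<in> set (Cs ! j)" "\<forall>i<j. y \<notin> set (Cs ! i)" "y \<notin> T"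
    and no_new: "\<forall>j'. j < j' \<and> j' < length Cs \<longrightarrow> set (Cs ! j') \<subseteq> (\<Union>i<j'. set (Cs ! i))"
  shows "\<exists>t. 0 < t \<and> t < length Cs \<and> revisiting Cs t \<and> entry_edges E Cs t = {{v, u}}"
proof -
  let ?inside = "\<lambda>i. set (Cs ! i) \<subseteq> T"
  obtain t0 where t0: "t0 < length Cs" "z \<in> set (Cs ! t0)" "\<forall>s<t0. z \<notin> set (Cs ! s)"
    using spanning_first_visit[OF sp z(1)] .
  have "t0 < j"
  proof (rule ccontr)
    assume "\<not> t0 < j"
    then consider "t0 = j" | "j < t0" by linarith
    then show False
    proof cases
      case 1
      have "j - 1 < j" using j(1) by simp
      then have "y \<in> entering Cs j" "z \<in> entering Cs j"
        using y(1,2) t0(2,3) 1 unfolding entering_def by blast+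
      moreover obtain b where "entering Cs j = {b}" using rt_walk_entering_singleton[OF W j] .
      ultimately show False using y(3) z(2) by auto
    next
      case 2
      then have "z \<in> (\<Union>i<t0. set (Cs ! i))" using no_new t0(1,2) by blast
      then show False using t0(3) by blast
    qed
  qed
  have "\<not> ?inside (t0 + (j - t0))" "?inside (t0 + 0)"
    using \<open>t0 < j\<close> y(1,3) confined[OF t0(1,2)] by auto
  from ex_least_nat_less[of "\<lambda>m. \<not> ?inside (t0 + m)", OF this(1)] this(2)
  obtain i where i: "i < j - t0" "?inside (t0 + i)" "\<not> ?inside (Suc (t0 + i))" by auto
  let ?t = "Suc (t0 + i)"
  have "?t < length Cs" using i(1) j(2) by simp
  note exit = rt_walk_leaves_through_boundary[OF W this boundary i(2,3)]
  have "?inside t0" "\<not> ?inside 0" using confined[OF t0(1,2)] x by auto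
  from ex_least_nat_less[of ?inside, OF this]
  obtain s where s: "s < t0" "\<not> ?inside s" "?inside (Suc s)" by auto
  have "Suc s < length Cs" using s(1) t0(1) by simp
  then have "u \<in> set (Cs ! s)" using rt_walk_enters_through_boundary[OF W _ boundary s(2,3)] by blast
  moreover have "s < ?t" using s(1) by simp
  ultimately have "revisiting Cs ?t" using exit(1) unfolding revisiting_def by blast
  then show ?thesis using exit(2) \<open>?t < length Cs\<close> by blast
qed

lemma rt_walk_first_visit_transition:
  assumes W: "rt_walk V E k Cs" and sp: "spanning V Cs" and w: "w \<in> V - set (Cs ! 0)"
  obtains t where "0 < t" "t < length Cs" "entering Cs t = {w}" "\<not> revisiting Cs t"
proof -
  obtain t where t: "t < length Cs" "w \<in> set (Cs ! t)" "\<forall>s<t. w \<notin> set (Cs ! s)"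
    using spanning_first_visit[OF sp] w by blast
  have "0 < t" using t(2) w by (cases t) auto
  then have "w \<in> entering Cs t" using t(2,3) unfolding entering_def by simp
  moreover obtain b where "entering Cs t = {b}" using rt_walk_entering_singleton[OF W \<open>0 < t\<close> t(1)] .
  ultimately have "entering Cs t = {w}" by simp
  moreover have "\<not> revisiting Cs t" using t(3) calculation unfolding revisiting_def by auto
  ultimately show ?thesis using that \<open>0 < t\<close> t(1) by blast
qed

lemma spanning_rt_walk_length_bound:
  assumes W: "rt_walk V E k Cs" and sp: "spanning V Cs" and fin: "finite V"
    and A: "\<forall>e\<in>A. \<exists>t. 0 < t \<and> t < length Cs \<and> revisiting Cs t \<and> entry_edges E Cs t = {e}"
  shows "card (V - set (Cs ! 0)) + card A \<le> length Cs - 1"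
proof -
  let ?N = "V - set (Cs ! 0)"
  have "\<forall>w\<in>?N. \<exists>t. 0 < t \<and> t < length Cs \<and> entering Cs t = {w} \<and> \<not> revisiting Cs t"
  proof
    fix w assume "w \<in> ?N"
    then show "\<exists>t. 0 < t \<and> t < length Cs \<and> entering Cs t = {w} \<and> \<not> revisiting Cs t"
      by (rule rt_walk_first_visit_transition[OF W sp]) blast
  qed
  from bchoice[OF this] obtain first where first: "\<forall>w\<in>?N. 0 < first w \<and> first w < length Cs
      \<and> entering Cs (first w) = {w} \<and> \<not> revisiting Cs (first w)"
    by blast
  from bchoice[OF A] obtain return where return: "\<forall>e\<in>A. 0 < return e \<and> return e < length Cs
      \<and> revisiting Cs (return e) \<and> entry_edges E Cs (return e) = {e}"
    by blast
  have "inj_on first ?N"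
  proof (rule inj_onI)
    fix w w' assume "w \<in> ?N" "w' \<in> ?N" "first w = first w'"
    then have "{w} = {w'}" using first by metis
    then show "w = w'" by simp
  qed
  moreover have "inj_on return A"
  proof (rule inj_onI)
    fix e e' assume "e \<in> A" "e' \<in> A" "return e = return e'"
    then have "{e} = {e'}" using return by metis
    then show "e = e'" by simp
  qed
  moreover have "first ` ?N \<inter> return ` A = {}"
  proof -
    have "\<not> revisiting Cs t" if "t \<in> first ` ?N" for t using that first by blast
    moreover have "revisiting Cs t" if "t \<in> return ` A" for t using that return by blast
    ultimately show ?thesis by blast
  qed
  moreover have sub: "first ` ?N \<union> return ` A \<subseteq> {1..<length Cs}"
  proof -
    have "0 < t \<and> t < length Cs" if "t \<in> first ` ?N \<union> return ` A" for t
      using that first return by blast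
    then show ?thesis by (auto simp: Suc_le_eq)
  qed
  ultimately have "card ?N + card A = card (first ` ?N \<union> return ` A)"
    using fin finite_subset[OF sub] by (simp add: card_image card_Un_disjoint)
  also have "\<dots> \<le> card {1..<length Cs}" using sub by (intro card_mono) simp_all
  finally show ?thesis by simp
qed

lemma sum_dkP_eq_card:
  assumes "finite E"
  shows "(\<Sum>e\<in>E. dkP V E k P e) = card {e \<in> E. dkP V E k P e = 1}"
proof -
  have "(\<Sum>e\<in>E. dkP V E k P e) = (\<Sum>e\<in>E. if dkP V E k P e = 1 then 1 else 0)"
    by (rule sum.cong) (auto simp: dkP_def)
  also have "\<dots> = card (E \<inter> {e. dkP V E k P e = 1})" using assms by (simp add: sum.If_cases)
  also have "E \<inter> {e. dkP V E k P e = 1} = {e \<in> E. dkP V E k P e = 1}" by blast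
  finally show ?thesis .
qed

lemma dkP_eq_1D:
  assumes "dkP V E k P e = 1"
  shows "e \<notin> path_edges P" "\<exists>u v. e = {u, v} \<and> dist_to_path V E P u < dist_to_path V E P v \<and>
      (\<exists>z\<in>component V (E - {e}) v. k - 1 \<le> gdist V (E - {e}) v z)" (is ?far)
proof -
  show eP: "e \<notin> path_edges P"
  proof
    assume "e \<in> path_edges P"
    then have "dkP V E k P e = 0" unfolding dkP_def by (rule if_P)
    then show False using assms by simp
  qed
  show ?far
  proof (rule ccontr)
    assume "\<not> ?far"
    then have "dkP V E k P e = 0" unfolding dkP_def by (simp only: if_not_P[OF eP] if_not_P if_False)
    then show False using assms by simp
  qed
qed

lemma dkP_edge_return_transition:
  assumes t: "is_tree V E" and W: "rt_walk V E k Cs" and sp: "spanning V Cs"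
    and j: "0 < j" "j < length Cs" and y: "y \<in> set (Cs ! j)" "\<forall>i<j. y \<notin> set (Cs ! i)"
    and no_new: "\<forall>j'. j < j' \<and> j' < length Cs \<longrightarrow> set (Cs ! j') \<subseteq> (\<Union>i<j'. set (Cs ! i))"
    and x: "x \<in> set (Cs ! 0)" and P: "gpath V E x y P"
    and e: "e \<in> E" "dkP V E k P e = 1"
  shows "\<exists>t. 0 < t \<and> t < length Cs \<and> revisiting Cs t \<and> entry_edges E Cs t = {e}"
proof -
  note eP = dkP_eq_1D(1)[OF e(2)]
  obtain u v z where uv: "e = {u, v}" and closer: "dist_to_path V E P u < dist_to_path V E P v"
    and z: "z \<in> component V (E - {e}) v" "k - 1 \<le> gdist V (E - {e}) v z"
    using dkP_eq_1D(2)[OF e(2)] by blast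
  let ?T = "component V (E - {{u, v}}) v"
  have sg: "simple_graph V E" using t by (simp add: is_tree_def)
  have uvE: "{u, v} \<in> E" using e(1) uv by simp
  have u: "u \<notin> ?T" using tree_edge_separates[OF t uvE] .
  have boundary: "a = v \<and> b = u" if "{a, b} \<in> E" "a \<in> ?T" "b \<notin> ?T" for a b
    using component_boundary_edge[OF sg that u] .
  have zT: "z \<in> ?T" and deep: "k - 1 \<le> gdist V (E - {{u, v}}) v z" using z uv by simp_all
  have zV: "z \<in> V" using zT by (simp add: component_def)
  have confined: "set (Cs ! i) \<subseteq> ?T" if "i < length Cs" "z \<in> set (Cs ! i)" for i
    using config_within_far_side[OF sg uvE u rt_walk_config[OF W that(1)] that(2) zT deep] .
  have "set P \<inter> ?T = {}" using path_avoids_far_side[OF t uvE _ P closer] eP uv by simp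
  moreover have "x \<in> set P" "y \<in> set P"
    using P hd_in_set[of P] last_in_set[of P] unfolding gpath_def by auto
  ultimately have "x \<notin> ?T" "y \<notin> ?T" by blast+
  with rt_walk_returns_through_boundary[OF W sp boundary zV zT confined x(1) _ j y]
  have "\<exists>t. 0 < t \<and> t < length Cs \<and> revisiting Cs t \<and> entry_edges E Cs t = {{v, u}}"
    using no_new by blast
  moreover have "{v, u} = e" using uv by (simp add: insert_commute)
  ultimately show ?thesis by simp
qed

theorem mainTheorem5:
  fixes V :: "'a set" and E :: "'a set set" and k j :: nat and Cs :: "'a list list"
    and x y :: 'a and P :: "'a list"
  assumes "is_tree V E"
    and "1 \<le> k" and "k \<le> card V"
    and "rt_walk V E k Cs" and "spanning V Cs" and "length Cs = Suc (hr V E k)"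
    and "1 \<le> j" and "j < length Cs"
    and "y \<in> set (Cs ! j)" and "\<forall>i<j. y \<notin> set (Cs ! i)"
    and "\<forall>j'. j < j' \<and> j' < length Cs \<longrightarrow> set (Cs ! j') \<subseteq> (\<Union>i<j'. set (Cs ! i))"
    and "x \<in> set (Cs ! 0)" and "\<forall>z\<in>set (Cs ! 0). gdist V E z y \<le> gdist V E x y"
    and "gpath V E x y P"
  shows "hr V E k \<ge> (card V - k) + (\<Sum>e\<in>E. dkP V E k P e)"
proof -
  have "simple_graph V E" using assms(1) by (simp add: is_tree_def)
  then have "finite V" "finite E" using simple_graph_finite_edges by (auto simp: simple_graph_def)
  have "card (V - set (Cs ! 0)) + card {e \<in> E. dkP V E k P e = 1} \<le> length Cs - 1"
    using dkP_edge_return_transition[OF assms(1,4,5) _ assms(8-12,14)] assms(7)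
    by (intro spanning_rt_walk_length_bound[OF assms(4,5) \<open>finite V\<close>]) simp
  moreover have "card (V - set (Cs ! 0)) = card V - k"
  proof -
    have "config V E k (Cs ! 0)" using assms(8) by (intro rt_walk_config[OF assms(4)]) linarith
    then have "card (set (Cs ! 0)) = k" "set (Cs ! 0) \<subseteq> V" by (simp_all add: config_def distinct_card)
    then show ?thesis using \<open>finite V\<close> by (simp add: card_Diff_subset finite_subset)
  qed
  ultimately show ?thesis using assms(6) sum_dkP_eq_card[OF \<open>finite E\<close>] by simp
qed

end
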